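(* Let $R$ be an associative ring with identity, let $a,b,c\in R$ with both $b$ and $c$ regular, and put $t=cab$. Then the following are equivalent: (i) $a$ has a $(b,c)$-inverse; (ii) $r(a)\cap bR=\{0\}$ and $R=abR\oplus r(c)$; (iii) $r(t)=r(b)$ and $tR=cR$; (iv) $l(t)=l(c)$ and $Rt=Rb$.
   Context: For $a,b,c\in R$, $a$ is $(b,c)$-invertible if there exists $y\in R$ with $y\in (bRy)\cap(yRc)$, $yab=b$ and $cay=c$; such $y$ is unique and called the $(b,c)$-inverse of $a$, denoted $a^{\|(b,c)}$. An element is regular if $x=xzx$ for some $z\in R$. For $x\in R$: $l(x)=\{z\in R:zx=0\}$, $r(x)=\{z\in R:xz=0\}$, $xR=\{xz:z\in R\}$, $Rx=\{zx:z\in R\}$; $\oplus$ denotes an internal direct sum of additive subgroups. *)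

theory Defs
  imports Main
begin

definition right_ideal_gen :: "'a::ring_1 \<Rightarrow> 'a set" where
  "right_ideal_gen x = {x * z | z. True}"

definition left_ideal_gen :: "'a::ring_1 \<Rightarrow> 'a set" where
  "left_ideal_gen x = {z * x | z. True}"

definition lann :: "'a::ring_1 \<Rightarrow> 'a set" where
  "lann x = {z. z * x = 0}"

definition rann :: "'a::ring_1 \<Rightarrow> 'a set" where
  "rann x = {z. x * z = 0}"

definition regular_el :: "'a::ring_1 \<Rightarrow> bool" where
  "regular_el x \<longleftrightarrow> (\<exists>z. x = x * z * x)"

definition is_bc_inverse :: "'a::ring_1 \<Rightarrow> 'a \<Rightarrow> 'a \<Rightarrow> 'a \<Rightarrow> bool" where
  "is_bc_inverse a b c y \<longleftrightarrow>
     y \<in> {b * z * y | z. True} \<and> y \<in> {y * z * c | z. True} \<and> y * a * b = b \<and> c * a * y = c"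

definition bc_invertible :: "'a::ring_1 \<Rightarrow> 'a \<Rightarrow> 'a \<Rightarrow> bool" where
  "bc_invertible a b c \<longleftrightarrow> (\<exists>y. is_bc_inverse a b c y)"

definition is_direct_sum :: "'a::ab_group_add set \<Rightarrow> 'a set \<Rightarrow> 'a set \<Rightarrow> bool" where
  "is_direct_sum S A B \<longleftrightarrow> S = {x + y | x y. x \<in> A \<and> y \<in> B} \<and> A \<inter> B = {0}"

end

theory Submission
  imports Defs
begin

text \<open>All four conditions turn out to say that \<open>c \<in> tR\<close> and \<open>b \<in> Rt\<close>:
a \<open>(b,c)\<close>-inverse is then \<open>y = uc\<close> for any \<open>u\<close> with \<open>b = ut\<close>. The annihilator conditions
recover these factorisations through regularity: a regular \<open>t = tgt\<close> satisfies
\<open>t(1 - gt) = 0\<close>, so \<open>r(t) \<subseteq> r(b)\<close> forces \<open>b = bgt \<in> Rt\<close>; dually \<open>l(t) \<subseteq> l(c)\<close> forces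
\<open>c \<in> tR\<close>. Regularity of \<open>t\<close> itself is inherited from \<open>c\<close> (or \<open>b\<close>) once \<open>tR = cR\<close>
(or \<open>Rt = Rb\<close>). For (ii), decomposing \<open>1 \<in> abR \<oplus> r(c)\<close> gives \<open>c \<in> cabR\<close>, and the two
trivial intersections give \<open>r(t) \<subseteq> r(b)\<close>.\<close>

lemma right_ideal_gen_subset_iff:
  fixes x y :: "'a::ring_1"
  shows "right_ideal_gen x \<subseteq> right_ideal_gen y \<longleftrightarrow> (\<exists>v. x = y * v)"
proof
  assume "right_ideal_gen x \<subseteq> right_ideal_gen y"
  moreover have "x \<in> right_ideal_gen x"
    unfolding right_ideal_gen_def by (metis (mono_tags) mem_Collect_eq mult_1_right)
  ultimately show "\<exists>v. x = y * v" unfolding right_ideal_gen_def by auto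
next
  assume "\<exists>v. x = y * v"
  then show "right_ideal_gen x \<subseteq> right_ideal_gen y"
    unfolding right_ideal_gen_def by (auto simp: mult.assoc)
qed

lemma left_ideal_gen_subset_iff:
  fixes x y :: "'a::ring_1"
  shows "left_ideal_gen x \<subseteq> left_ideal_gen y \<longleftrightarrow> (\<exists>u. x = u * y)"
proof
  assume "left_ideal_gen x \<subseteq> left_ideal_gen y"
  moreover have "x \<in> left_ideal_gen x"
    unfolding left_ideal_gen_def by (metis (mono_tags) mem_Collect_eq mult_1_left)
  ultimately show "\<exists>u. x = u * y" unfolding left_ideal_gen_def by auto
next
  assume "\<exists>u. x = u * y"
  then show "left_ideal_gen x \<subseteq> left_ideal_gen y"
    unfolding left_ideal_gen_def by (auto simp: mult.assoc[symmetric])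
qed

lemma rann_subset_rann_mult_left:
  fixes x y :: "'a::ring_1"
  shows "rann y \<subseteq> rann (x * y)"
  unfolding rann_def by (auto simp: mult.assoc)

lemma lann_subset_lann_mult_right:
  fixes x y :: "'a::ring_1"
  shows "lann x \<subseteq> lann (x * y)"
  unfolding lann_def by (auto simp: mult.assoc[symmetric])

lemma regular_el_if_right_ideal_gen_eq:
  fixes t c :: "'a::ring_1"
  assumes "regular_el c" and "right_ideal_gen t = right_ideal_gen c"
  shows "regular_el t"
proof -
  obtain w where w: "c = c * w * c" using assms(1) regular_el_def by blast
  obtain v where v: "c = t * v" using assms(2) right_ideal_gen_subset_iff by blast
  obtain k where k: "t = c * k" using assms(2) right_ideal_gen_subset_iff by blast
  have "t = c * w * t" using w k by (metis mult.assoc)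
  also have "\<dots> = t * (v * w) * t" by (subst (1) v) (simp add: mult.assoc)
  finally show ?thesis unfolding regular_el_def by blast
qed

lemma regular_el_if_left_ideal_gen_eq:
  fixes t b :: "'a::ring_1"
  assumes "regular_el b" and "left_ideal_gen t = left_ideal_gen b"
  shows "regular_el t"
proof -
  obtain z where z: "b = b * z * b" using assms(1) regular_el_def by blast
  obtain u where u: "b = u * t" using assms(2) left_ideal_gen_subset_iff by blast
  obtain k where k: "t = k * b" using assms(2) left_ideal_gen_subset_iff by blast
  have "t = t * z * b" using z k by (metis mult.assoc)
  also have "\<dots> = t * (z * u) * t" by (subst (1) u) (simp add: mult.assoc)
  finally show ?thesis unfolding regular_el_def by blast
qed

lemma left_multiple_if_rann_subset:
  fixes t b :: "'a::ring_1"
  assumes "regular_el t" and "rann t \<subseteq> rann b"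
  shows "\<exists>u. b = u * t"
proof -
  obtain g where g: "t = t * g * t" using assms(1) regular_el_def by blast
  have "t * (1 - g * t) = 0" using g by (simp add: right_diff_distrib mult.assoc)
  then have "b * (1 - g * t) = 0" using assms(2) unfolding rann_def by blast
  then have "b = (b * g) * t" by (simp add: algebra_simps)
  then show ?thesis by blast
qed

lemma right_multiple_if_lann_subset:
  fixes t c :: "'a::ring_1"
  assumes "regular_el t" and "lann t \<subseteq> lann c"
  shows "\<exists>v. c = t * v"
proof -
  obtain g where g: "t = t * g * t" using assms(1) regular_el_def by blast
  have "(1 - t * g) * t = 0" using g by (simp add: left_diff_distrib)
  then have "(1 - t * g) * c = 0" using assms(2) unfolding lann_def by blast
  then have "c = t * (g * c)" by (simp add: algebra_simps)
  then show ?thesis by blast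
qed

lemma bc_invertible_iff_factorizations:
  fixes a b c :: "'a::ring_1"
  shows "bc_invertible a b c \<longleftrightarrow> (\<exists>v. c = c * a * b * v) \<and> (\<exists>u. b = u * (c * a * b))"
proof
  assume "bc_invertible a b c"
  then obtain y z w where z: "y = b * z * y" and w: "y = y * w * c"
    and yab: "y * a * b = b" and cay: "c * a * y = c"
    unfolding bc_invertible_def is_bc_inverse_def by blast
  have "c = c * a * b * (z * y)" using cay z by (metis mult.assoc)
  moreover have "b = (y * w) * (c * a * b)" using yab w by (metis mult.assoc)
  ultimately show "(\<exists>v. c = c * a * b * v) \<and> (\<exists>u. b = u * (c * a * b))" by blast
next
  assume "(\<exists>v. c = c * a * b * v) \<and> (\<exists>u. b = u * (c * a * b))"
  then obtain u v where v: "c = c * a * b * v" and u: "b = u * (c * a * b)" by blast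
  define y where "y = u * c"
  have yab: "y * a * b = b" using u by (simp add: y_def mult.assoc)
  have yv: "y = b * v" using u v y_def by (metis mult.assoc)
  have cay: "c * a * y = c" using v yv by (simp add: mult.assoc)
  have yay: "y = y * a * y"
    using yab yv by (metis mult.assoc)
  have "y = b * (v * a) * y" using yay yv by (simp add: mult.assoc)
  moreover have "y = y * (a * u) * c" using yay by (simp add: y_def mult.assoc)
  ultimately show "bc_invertible a b c"
    unfolding bc_invertible_def is_bc_inverse_def using yab cay by blast
qed

lemma bc_invertible_iff_rann_right_ideal_gen:
  fixes a b c :: "'a::ring_1"
  assumes "regular_el c"
  shows "bc_invertible a b c \<longleftrightarrow>
    rann (c * a * b) = rann b \<and> right_ideal_gen (c * a * b) = right_ideal_gen c"
    (is "_ \<longleftrightarrow> rann ?t = _ \<and> _")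
proof -
  have t_in_cR: "right_ideal_gen ?t \<subseteq> right_ideal_gen c"
    using right_ideal_gen_subset_iff by (metis mult.assoc)
  have "rann b \<subseteq> rann ?t" using rann_subset_rann_mult_left by blast
  moreover have "rann ?t \<subseteq> rann b \<longleftrightarrow> (\<exists>u. b = u * ?t)"
    if "right_ideal_gen ?t = right_ideal_gen c"
    using left_multiple_if_rann_subset[OF regular_el_if_right_ideal_gen_eq[OF assms that]]
      rann_subset_rann_mult_left by metis
  ultimately show ?thesis
    unfolding bc_invertible_iff_factorizations
    using t_in_cR right_ideal_gen_subset_iff[of c ?t] by blast
qed

lemma bc_invertible_iff_lann_left_ideal_gen:
  fixes a b c :: "'a::ring_1"
  assumes "regular_el b"
  shows "bc_invertible a b c \<longleftrightarrow>
    lann (c * a * b) = lann c \<and> left_ideal_gen (c * a * b) = left_ideal_gen b"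
    (is "_ \<longleftrightarrow> lann ?t = _ \<and> _")
proof -
  have t_in_Rb: "left_ideal_gen ?t \<subseteq> left_ideal_gen b"
    using left_ideal_gen_subset_iff by blast
  have "lann c \<subseteq> lann ?t" using lann_subset_lann_mult_right by (metis mult.assoc)
  moreover have "lann ?t \<subseteq> lann c \<longleftrightarrow> (\<exists>v. c = ?t * v)"
    if "left_ideal_gen ?t = left_ideal_gen b"
    using right_multiple_if_lann_subset[OF regular_el_if_left_ideal_gen_eq[OF assms that]]
      lann_subset_lann_mult_right by metis
  ultimately show ?thesis
    unfolding bc_invertible_iff_factorizations
    using t_in_Rb left_ideal_gen_subset_iff[of b ?t] by blast
qed

lemma rann_inter_direct_sum_if_factorizations:
  fixes a b c u v :: "'a::ring_1"
  assumes v: "c = c * a * b * v" and u: "b = u * (c * a * b)"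
  shows "rann a \<inter> right_ideal_gen b = {0}"
    and "is_direct_sum UNIV (right_ideal_gen (a * b)) (rann c)"
proof -
  have "x = 0" if "a * x = 0" and "x = b * s" for x s
  proof -
    have "x = u * c * (a * x)" using u that(2) by (metis mult.assoc)
    then show ?thesis using that(1) by simp
  qed
  then show "rann a \<inter> right_ideal_gen b = {0}"
    unfolding rann_def right_ideal_gen_def by (auto; metis mult_zero_right)
  have "x = 0" if "c * x = 0" and "x = a * b * s" for x s
  proof -
    have "x = a * u * (c * x)" using u that(2) by (metis mult.assoc)
    then show ?thesis using that(1) by simp
  qed
  then have trivial_inter: "right_ideal_gen (a * b) \<inter> rann c = {0}"
    unfolding rann_def right_ideal_gen_def by (auto; metis mult_zero_right)
  have "r \<in> {x + y | x y. x \<in> right_ideal_gen (a * b) \<and> y \<in> rann c}" for r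
  proof -
    have "c * (r - a * b * (v * r)) = c * r - (c * a * b * v) * r"
      by (simp add: right_diff_distrib mult.assoc)
    then have "c * (r - a * b * (v * r)) = 0" using v by simp
    then have "r - a * b * (v * r) \<in> rann c" unfolding rann_def by simp
    moreover have "a * b * (v * r) \<in> right_ideal_gen (a * b)" unfolding right_ideal_gen_def by blast
    moreover have "r = a * b * (v * r) + (r - a * b * (v * r))" by simp
    ultimately show ?thesis by blast
  qed
  with trivial_inter show "is_direct_sum UNIV (right_ideal_gen (a * b)) (rann c)"
    unfolding is_direct_sum_def by blast
qed

lemma bc_invertible_iff_rann_inter_direct_sum:
  fixes a b c :: "'a::ring_1"
  assumes "regular_el c"
  shows "bc_invertible a b c \<longleftrightarrow>
    rann a \<inter> right_ideal_gen b = {0} \<and> is_direct_sum UNIV (right_ideal_gen (a * b)) (rann c)"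
proof
  assume "bc_invertible a b c"
  then obtain u v where v: "c = c * a * b * v" and u: "b = u * (c * a * b)"
    unfolding bc_invertible_iff_factorizations by blast
  show "rann a \<inter> right_ideal_gen b = {0} \<and> is_direct_sum UNIV (right_ideal_gen (a * b)) (rann c)"
    using rann_inter_direct_sum_if_factorizations[OF v u] by (rule conjI)
next
  assume "rann a \<inter> right_ideal_gen b = {0} \<and> is_direct_sum UNIV (right_ideal_gen (a * b)) (rann c)"
  then have ra: "rann a \<inter> right_ideal_gen b = {0}"
    and ds: "is_direct_sum UNIV (right_ideal_gen (a * b)) (rann c)" by simp_all
  have "1 \<in> {x + y | x y. x \<in> right_ideal_gen (a * b) \<and> y \<in> rann c}"
    using ds unfolding is_direct_sum_def by (metis UNIV_I)
  then obtain s q where 1: "1 = a * b * s + q" and q: "c * q = 0"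
    unfolding right_ideal_gen_def rann_def by blast
  have "c = c * (a * b * s + q)" using 1 by simp
  then have "c = c * a * b * s" using q by (simp add: distrib_left mult.assoc)
  then have "right_ideal_gen c \<subseteq> right_ideal_gen (c * a * b)"
    using right_ideal_gen_subset_iff[of c "c * a * b"] by blast
  moreover have "right_ideal_gen (c * a * b) \<subseteq> right_ideal_gen c"
    using right_ideal_gen_subset_iff[of "c * a * b" c] by (metis mult.assoc)
  moreover have "rann (c * a * b) \<subseteq> rann b"
  proof
    fix x assume "x \<in> rann (c * a * b)"
    then have "a * b * x \<in> right_ideal_gen (a * b) \<inter> rann c"
      unfolding rann_def right_ideal_gen_def by (auto simp: mult.assoc)
    then have "a * (b * x) = 0" using ds unfolding is_direct_sum_def by (simp add: mult.assoc)
    then have "b * x \<in> rann a \<inter> right_ideal_gen b" unfolding rann_def right_ideal_gen_def by blast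
    then show "x \<in> rann b" using ra unfolding rann_def by blast
  qed
  moreover have "rann b \<subseteq> rann (c * a * b)" by (rule rann_subset_rann_mult_left)
  ultimately show "bc_invertible a b c"
    by (simp add: bc_invertible_iff_rann_right_ideal_gen[OF assms] subset_antisym)
qed

theorem theorem3p6:
  fixes a b c :: "'a::ring_1"
  assumes "regular_el b" and "regular_el c"
  defines "t \<equiv> c * a * b"
  shows "(bc_invertible a b c
          \<longleftrightarrow> (rann a \<inter> right_ideal_gen b = {0}
               \<and> is_direct_sum UNIV (right_ideal_gen (a * b)) (rann c)))
       \<and> (bc_invertible a b c
          \<longleftrightarrow> (rann t = rann b \<and> right_ideal_gen t = right_ideal_gen c))
       \<and> (bc_invertible a b c
          \<longleftrightarrow> (lann t = lann c \<and> left_ideal_gen t = left_ideal_gen b))"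
  unfolding t_def
  by (intro conjI bc_invertible_iff_rann_inter_direct_sum[OF assms(2)]
      bc_invertible_iff_rann_right_ideal_gen[OF assms(2)]
      bc_invertible_iff_lann_left_ideal_gen[OF assms(1)])

end
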